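(* For all $M>0$, all $q$ with $|q|<1$ and all $\epsilon>0$ there exist constants $C_1,C_2>0$ such that for all $p$ with $|p|<|q|$ we have $C_1\le|(z;p,q)|\le C_2$ for all $z$ with $|z|\le M$ and $|1-z/w|>\epsilon$ for every zero $w$ of $(z;p,q)$.
   Context: $(z;p,q)=\prod_{r,s\ge0}(1-zp^rq^s)$; its zeros are $p^{-r}q^{-s}$, $r,s\ge0$. The paper phrases the condition on $z$ as "$z$ away from the set of zeros". *)

theory Defs
  imports "HOL-Analysis.Analysis"
begin

definition dpoch :: "complex \<Rightarrow> complex \<Rightarrow> complex \<Rightarrow> complex" where
  "dpoch z p q = (\<Prod>r. \<Prod>s. (1 - z * p ^ r * q ^ s))"

text \<open>Zeros of z |-> (z;p,q): the points w = p^(-r) q^(-s), i.e. those w with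
  w p^r q^s = 1 for some r,s >= 0 (this also covers p = 0 correctly).\<close>
definition dpoch_zeros :: "complex \<Rightarrow> complex \<Rightarrow> complex set" where
  "dpoch_zeros p q = {w. \<exists>r s::nat. w * p ^ r * q ^ s = 1}"

end

theory Submission imports Defs begin

text \<open>
  Write each factor as \<open>1 - x\<close> with \<open>x = z p\<^sup>r q\<^sup>s\<close>. Then \<open>|(1 - x) - 1| = |x|\<close>, and
  avoiding the zeros by \<open>\<epsilon>\<close> gives \<open>|1 - x| \<ge> exp (-K |x|)\<close> with \<open>K = 2 + 2 |ln \<epsilon>|\<close>:
  for \<open>|x| \<le> 1/2\<close> this is \<open>1 - y \<ge> exp (-2y)\<close>, otherwise it is \<open>|1 - x| > \<epsilon>\<close>.
  A product whose factors satisfy both bounds with summable \<open>|x|\<close> lies between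
  \<open>exp (-K B)\<close> and \<open>exp B\<close>, \<open>B\<close> bounding the sum. Applied to each inner product over \<open>s\<close>
  and then to the outer product over \<open>r\<close>, this gives a \<open>B\<close> depending only on \<open>M\<close> and \<open>|q|\<close>.
\<close>

lemma exp_minus_one_le_mult_exp:
  fixes y :: real
  assumes "y \<ge> 0"
  shows "exp y - 1 \<le> y * exp y"
proof -
  have "(1 - y) * exp y \<le> exp (- y) * exp y"
    using exp_ge_add_one_self[of "- y"] by (intro mult_right_mono) auto
  thus ?thesis by (simp add: exp_minus field_simps)
qed

lemma norm_one_minus_ge_exp:
  fixes x :: "'a :: real_normed_algebra_1" and \<epsilon> :: real
  assumes "\<epsilon> > 0" and "x = 0 \<or> norm (1 - x) > \<epsilon>"
  shows "exp (- (2 + 2 * \<bar>ln \<epsilon>\<bar>) * norm x) \<le> norm (1 - x)"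
proof (cases "norm x \<le> 1/2")
  case True
  define y where "y = norm x"
  have y: "0 \<le> y" "y \<le> 1/2" using True by (auto simp: y_def)
  have "exp (- (2 + 2 * \<bar>ln \<epsilon>\<bar>) * y) \<le> exp (- 2 * y)"
    using y mult_nonneg_nonneg[of "\<bar>ln \<epsilon>\<bar>" y] by (simp add: algebra_simps)
  also have "\<dots> = 1 / exp (2 * y)" by (simp add: exp_minus field_simps)
  also have "\<dots> \<le> 1 / (1 + 2 * y)"
    using exp_ge_add_one_self[of "2 * y"] y by (intro divide_left_mono) auto
  also have "\<dots> \<le> 1 - y"
    using y mult_nonneg_nonneg[of y "1 - 2 * y"] by (simp add: field_simps)
  also have "1 - y \<le> norm (1 - x)" using norm_triangle_ineq2[of 1 x] by (simp add: y_def)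
  finally show ?thesis by (simp add: y_def)
next
  case False
  hence "norm (1 - x) > \<epsilon>" using assms(2) by auto
  have "exp (- (2 + 2 * \<bar>ln \<epsilon>\<bar>) * norm x) \<le> exp (- (2 + 2 * \<bar>ln \<epsilon>\<bar>) * (1/2))"
    using False mult_left_mono[of "1/2" "norm x" "2 + 2 * \<bar>ln \<epsilon>\<bar>"]
    by (intro exp_mono) (auto simp: algebra_simps)
  also have "\<dots> \<le> exp (ln \<epsilon>)" by simp
  also have "\<dots> = \<epsilon>" using \<open>\<epsilon> > 0\<close> by simp
  finally show ?thesis using \<open>norm (1 - x) > \<epsilon>\<close> by simp
qed

lemma convergent_prod_norm_bounds:
  fixes f :: "nat \<Rightarrow> 'a :: {real_normed_field, banach}"
    and b :: "nat \<Rightarrow> real"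
  assumes b_nonneg: "\<And>n. b n \<ge> 0" and "summable b" and "K \<ge> 0"
    and lower: "\<And>n. exp (- K * b n) \<le> norm (f n)"
    and upper: "\<And>n. norm (f n - 1) \<le> b n"
    and "suminf b \<le> B"
  shows "convergent_prod f \<and> exp (- K * B) \<le> norm (prodinf f) \<and>
    norm (prodinf f - 1) \<le> exp B - 1"
proof -
  have "summable (\<lambda>n. norm (f n - 1))"
    by (rule summable_comparison_test[OF _ \<open>summable b\<close>]) (use upper in auto)
  hence conv: "convergent_prod f"
    by (intro abs_convergent_prod_imp_convergent_prod summable_imp_abs_convergent_prod)
  have lim: "(\<lambda>n. \<Prod>i\<le>n. f i) \<longlonglongrightarrow> prodinf f"
    by (rule convergent_prod_LIMSEQ[OF conv])
  have partial_sum: "sum b {..n} \<le> B" for n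
    using sum_le_suminf[OF \<open>summable b\<close>, of "{..n}"] b_nonneg \<open>suminf b \<le> B\<close> by force
  have partial_lower: "exp (- K * B) \<le> norm (\<Prod>i\<le>n. f i)" for n
  proof -
    have "exp (- K * B) \<le> exp (- K * sum b {..n})"
      using partial_sum[of n] \<open>K \<ge> 0\<close> by (simp add: mult_left_mono)
    also have "\<dots> = (\<Prod>i\<le>n. exp (- K * b i))"
      by (simp add: exp_sum[symmetric] sum_distrib_left sum_negf)
    also have "\<dots> \<le> (\<Prod>i\<le>n. norm (f i))"
      by (intro prod_mono) (use lower in auto)
    also have "\<dots> = norm (\<Prod>i\<le>n. f i)" by (simp add: prod_norm)
    finally show ?thesis .
  qed
  have partial_upper: "norm ((\<Prod>i\<le>n. f i) - 1) \<le> exp B - 1" for n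
  proof -
    have "norm ((\<Prod>i\<le>n. f i) - 1) = norm ((\<Prod>i\<le>n. 1 + (f i - 1)) - 1)" by simp
    also have "\<dots> \<le> (\<Prod>i\<le>n. 1 + norm (f i - 1)) - 1"
      by (rule norm_prod_minus1_le_prod_minus1)
    also have "\<dots> \<le> (\<Prod>i\<le>n. 1 + b i) - 1"
      using upper by (smt (verit) prod_mono norm_ge_zero)
    also have "\<dots> \<le> exp (sum b {..n}) - 1"
      using prod_le_exp_sum[of "{..n}" b] b_nonneg by auto
    also have "\<dots> \<le> exp B - 1" using partial_sum[of n] by simp
    finally show ?thesis .
  qed
  have "exp (- K * B) \<le> norm (prodinf f)"
    by (rule tendsto_le[OF _ tendsto_norm[OF lim] tendsto_const]) (use partial_lower in auto)
  moreover have "norm (prodinf f - 1) \<le> exp B - 1"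
    by (rule tendsto_le[OF _ tendsto_const tendsto_norm[OF tendsto_diff[OF lim tendsto_const]]])
      (use partial_upper in auto)
  ultimately show ?thesis using conv by blast
qed

lemma dpoch_factor_avoids_zero:
  assumes "\<forall>w \<in> dpoch_zeros p q. norm (1 - z / w) > \<epsilon>"
  shows "z * p ^ r * q ^ s = 0 \<or> norm (1 - z * p ^ r * q ^ s) > \<epsilon>"
proof (cases "p ^ r * q ^ s = 0")
  case True
  thus ?thesis by (simp add: mult.assoc)
next
  case False
  hence "inverse (p ^ r * q ^ s) * p ^ r * q ^ s = 1" by (simp add: field_simps)
  hence "inverse (p ^ r * q ^ s) \<in> dpoch_zeros p q" unfolding dpoch_zeros_def by blast
  with assms have "norm (1 - z / inverse (p ^ r * q ^ s)) > \<epsilon>" by blast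
  thus ?thesis by (simp add: divide_inverse mult.assoc)
qed

lemma dpoch_row_bounds:
  fixes z p q :: complex and r :: nat
  defines "B \<equiv> norm z * norm p ^ r / (1 - norm q)"
  assumes "norm q < 1" and "\<epsilon> > 0"
    and avoid: "\<And>s. z * p ^ r * q ^ s = 0 \<or> norm (1 - z * p ^ r * q ^ s) > \<epsilon>"
  shows "convergent_prod (\<lambda>s. 1 - z * p ^ r * q ^ s) \<and>
    exp (- (2 + 2 * \<bar>ln \<epsilon>\<bar>) * B) \<le> norm (\<Prod>s. 1 - z * p ^ r * q ^ s) \<and>
    norm ((\<Prod>s. 1 - z * p ^ r * q ^ s) - 1) \<le> exp B - 1"
proof (rule convergent_prod_norm_bounds)
  have "(\<lambda>s. norm q ^ s) sums (1 / (1 - norm q))"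
    using geometric_sums[of "norm q"] \<open>norm q < 1\<close> by simp
  from sums_mult[OF this, of "norm z * norm p ^ r"]
  have geom: "(\<lambda>s. norm (z * p ^ r * q ^ s)) sums B"
    by (simp add: B_def norm_mult norm_power)
  show "summable (\<lambda>s. norm (z * p ^ r * q ^ s))" using geom by (simp add: sums_iff)
  show "(\<Sum>s. norm (z * p ^ r * q ^ s)) \<le> B" using geom by (simp add: sums_iff)
  show "exp (- (2 + 2 * \<bar>ln \<epsilon>\<bar>) * norm (z * p ^ r * q ^ s)) \<le> norm (1 - z * p ^ r * q ^ s)" for s
    by (rule norm_one_minus_ge_exp[OF \<open>\<epsilon> > 0\<close> avoid])
qed auto

lemma dpoch_norm_bounds:
  fixes z p q :: complex
  defines "B \<equiv> exp (norm z / (1 - norm q)) * (norm z / ((1 - norm p) * (1 - norm q)))"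
  assumes "norm p < 1" and "norm q < 1" and "\<epsilon> > 0"
    and avoid: "\<forall>w \<in> dpoch_zeros p q. norm (1 - z / w) > \<epsilon>"
  shows "exp (- (2 + 2 * \<bar>ln \<epsilon>\<bar>) * B) \<le> norm (dpoch z p q) \<and> norm (dpoch z p q) \<le> exp B"
proof -
  define K where "K = 2 + 2 * \<bar>ln \<epsilon>\<bar>"
  define c where "c = norm z / (1 - norm q)"
  define row where "row r = (\<Prod>s. 1 - z * p ^ r * q ^ s)" for r
  define Br where "Br r = norm z * norm p ^ r / (1 - norm q)" for r
  have K_nonneg: "K \<ge> 0" by (simp add: K_def)
  have row: "exp (- K * Br r) \<le> norm (row r) \<and> norm (row r - 1) \<le> exp (Br r) - 1" for r
    using dpoch_row_bounds[OF \<open>norm q < 1\<close> \<open>\<epsilon> > 0\<close> dpoch_factor_avoids_zero[OF avoid]]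
    unfolding row_def Br_def K_def by blast
  have Br_nonneg: "0 \<le> Br r" for r using \<open>norm q < 1\<close> by (simp add: Br_def)
  have Br_le: "Br r \<le> c" for r
  proof -
    have "norm z * norm p ^ r \<le> norm z"
      using \<open>norm p < 1\<close> by (intro mult_left_le power_le_one) auto
    thus ?thesis using \<open>norm q < 1\<close> unfolding Br_def c_def by (intro divide_right_mono) auto
  qed
  \<comment> \<open>The rows play the role of the factors, with deviation \<open>exp (Br r) - 1\<close> in place of \<open>|x|\<close>.\<close>
  have row_dev: "exp (Br r) - 1 \<le> exp c * Br r" for r
  proof -
    have "exp (Br r) - 1 \<le> Br r * exp (Br r)" by (rule exp_minus_one_le_mult_exp[OF Br_nonneg])
    also have "\<dots> \<le> Br r * exp c" using Br_le[of r] Br_nonneg[of r] by (intro mult_left_mono) auto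
    finally show ?thesis by (simp add: mult.commute)
  qed
  have "Br sums (norm z / ((1 - norm p) * (1 - norm q)))"
    using sums_mult[OF geometric_sums[of "norm p"], of "norm z / (1 - norm q)"] \<open>norm p < 1\<close>
    by (simp add: Br_def[abs_def] field_simps)
  hence majorant: "(\<lambda>r. exp c * Br r) sums B"
    unfolding B_def c_def by (rule sums_mult)
  have dev_summable: "summable (\<lambda>r. exp (Br r) - 1)"
    by (rule summable_comparison_test[OF _ sums_summable[OF majorant]])
      (use row_dev Br_nonneg in \<open>auto simp: abs_of_nonneg\<close>)
  have "convergent_prod row \<and> exp (- K * B) \<le> norm (prodinf row) \<and>
      norm (prodinf row - 1) \<le> exp B - 1"
  proof (rule convergent_prod_norm_bounds[where b = "\<lambda>r. exp (Br r) - 1"])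
    show "(\<Sum>r. exp (Br r) - 1) \<le> B"
      using suminf_le[OF row_dev dev_summable sums_summable[OF majorant]] majorant
      by (simp add: sums_iff)
    show "exp (- K * (exp (Br r) - 1)) \<le> norm (row r)" for r
    proof -
      have "K * Br r \<le> K * (exp (Br r) - 1)"
        using exp_ge_add_one_self[of "Br r"] by (intro mult_left_mono[OF _ K_nonneg]) linarith
      hence "exp (- K * (exp (Br r) - 1)) \<le> exp (- K * Br r)" by simp
      thus ?thesis using row[of r] by linarith
    qed
  qed (use row Br_nonneg K_nonneg dev_summable in auto)
  moreover have "dpoch z p q = prodinf row" by (simp add: dpoch_def row_def[abs_def])
  ultimately show ?thesis
    using norm_triangle_ineq[of 1 "prodinf row - 1"] unfolding K_def by auto
qed

theorem lemmaA2:
  fixes M \<epsilon> :: real and q :: complex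
  assumes "M > 0" and "norm q < 1" and "\<epsilon> > 0"
  shows "\<exists>C1 C2::real. C1 > 0 \<and> C2 > 0 \<and>
    (\<forall>p z. norm p < norm q \<longrightarrow> norm z \<le> M \<longrightarrow>
       (\<forall>w \<in> dpoch_zeros p q. norm (1 - z / w) > \<epsilon>) \<longrightarrow>
       C1 \<le> norm (dpoch z p q) \<and> norm (dpoch z p q) \<le> C2)"
proof -
  define K where "K = 2 + 2 * \<bar>ln \<epsilon>\<bar>"
  define B where "B = exp (M / (1 - norm q)) * (M / ((1 - norm q) * (1 - norm q)))"
  have "exp (- K * B) \<le> norm (dpoch z p q) \<and> norm (dpoch z p q) \<le> exp B"
    if "norm p < norm q" "norm z \<le> M" "\<forall>w \<in> dpoch_zeros p q. norm (1 - z / w) > \<epsilon>" for p z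
  proof -
    define Bpz where
      "Bpz = exp (norm z / (1 - norm q)) * (norm z / ((1 - norm p) * (1 - norm q)))"
    have "norm z / (1 - norm q) \<le> M / (1 - norm q)"
      using that(2) \<open>norm q < 1\<close> by (intro divide_right_mono) auto
    moreover have "norm z / ((1 - norm p) * (1 - norm q)) \<le> M / ((1 - norm q) * (1 - norm q))"
      using that(1,2) \<open>norm q < 1\<close> \<open>M > 0\<close> by (intro frac_le mult_right_mono) auto
    ultimately have "Bpz \<le> B"
      using that(1) \<open>norm q < 1\<close> unfolding Bpz_def B_def by (intro mult_mono) auto
    moreover have "K \<ge> 0" by (simp add: K_def)
    ultimately have "exp (- K * B) \<le> exp (- K * Bpz) \<and> exp Bpz \<le> exp B"
      by (simp add: mult_left_mono)
    moreover have "exp (- K * Bpz) \<le> norm (dpoch z p q) \<and> norm (dpoch z p q) \<le> exp Bpz"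
      using dpoch_norm_bounds[of p q \<epsilon> z] that \<open>norm q < 1\<close> \<open>\<epsilon> > 0\<close>
      unfolding Bpz_def K_def by simp
    ultimately show ?thesis by linarith
  qed
  thus ?thesis by (intro exI[of _ "exp (- K * B)"] exI[of _ "exp B"]) auto
qed

end
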